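(* Let $(J,\mu)$ be a standard Borel space with a Borel measure $\mu$, and let $\mathcal{I}$ be a family of Borel subsets of $J$ satisfying (I1) if $I_1\subseteq I_2\subseteq\cdots$ with $I_n\in\mathcal{I}$ for all $n\in\mathbb{Z}_+$, then $\bigcup_n I_n\in\mathcal{I}$. Then $\mathcal{I}$ satisfies (I2) for all $I_1,I_2\in\mathcal{I}$ with $\mu(I_1)<\mu(I_2)$ there exists $I_3\in\mathcal{I}$ with $I_1\subseteq I_3\subseteq I_1\cup I_2$ and $\mu(I_3)>\mu(I_1)$ if and only if it satisfies (I2') for all $I_1,I_2\in\mathcal{I}$ there exists $I_3\in\mathcal{I}$ with $I_1\subseteq I_3\subseteq I_1\cup I_2$ and $\mu(I_3)\ge\mu(I_2)$. *)

theory Defs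
  imports "HOL-Analysis.Analysis"
begin

definition axiom_I1 :: "'a set set \<Rightarrow> bool" where
  "axiom_I1 \<I> \<longleftrightarrow>
     (\<forall>I :: nat \<Rightarrow> 'a set. incseq I \<longrightarrow> (\<forall>n. I n \<in> \<I>) \<longrightarrow> (\<Union>n. I n) \<in> \<I>)"

definition axiom_I2 :: "'a measure \<Rightarrow> 'a set set \<Rightarrow> bool" where
  "axiom_I2 M \<I> \<longleftrightarrow>
     (\<forall>I1\<in>\<I>. \<forall>I2\<in>\<I>. emeasure M I1 < emeasure M I2 \<longrightarrow>
        (\<exists>I3\<in>\<I>. I1 \<subseteq> I3 \<and> I3 \<subseteq> I1 \<union> I2 \<and> emeasure M I3 > emeasure M I1))"

definition axiom_I2' :: "'a measure \<Rightarrow> 'a set set \<Rightarrow> bool" where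
  "axiom_I2' M \<I> \<longleftrightarrow>
     (\<forall>I1\<in>\<I>. \<forall>I2\<in>\<I>.
        (\<exists>I3\<in>\<I>. I1 \<subseteq> I3 \<and> I3 \<subseteq> I1 \<union> I2 \<and> emeasure M I3 \<ge> emeasure M I2))"

end

theory Submission
  imports Defs
begin

text \<open>(I2') trivially implies (I2). For the converse, suppose no member of
  \<open>F = {K \<in> \<I>. I1 \<subseteq> K \<subseteq> I1 \<union> I2}\<close> has measure \<open>\<ge> \<mu>(I2)\<close>. A greedy increasing
  sequence in \<open>F\<close>, each term almost maximising the measure among the members of \<open>F\<close>
  containing its predecessor, has by (I1) a union \<open>U \<in> F\<close> whose measure no member of
  \<open>F\<close> containing \<open>U\<close> exceeds. But \<open>\<mu>(U) < \<mu>(I2)\<close>, so (I2) yields such a member.\<close>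

lemma exists_saturated_superset:
  fixes f :: "'a set \<Rightarrow> real"
  assumes incseq_Union: "\<And>J. incseq J \<Longrightarrow> (\<And>n. J n \<in> F) \<Longrightarrow> (\<Union>n. J n) \<in> F"
    and mono: "\<And>K L. K \<in> F \<Longrightarrow> L \<in> F \<Longrightarrow> K \<subseteq> L \<Longrightarrow> f K \<le> f L"
    and bounded: "bdd_above (f ` F)"
    and "J0 \<in> F"
  obtains U where "U \<in> F" "J0 \<subseteq> U" "\<And>K. K \<in> F \<Longrightarrow> U \<subseteq> K \<Longrightarrow> f K \<le> f U"
proof -
  define above where "above J = {K \<in> F. J \<subseteq> K}" for J
  define t where "t J = (SUP K\<in>above J. f K)" for J
  have bdd_above: "bdd_above (f ` above J)" for J
    using bounded by (rule bdd_above_mono) (auto simp: above_def)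
  have almost_max: "\<exists>K\<in>above J. t J - inverse (real (Suc n)) < f K" if "J \<in> F" for J n
  proof -
    have "above J \<noteq> {}" using that by (auto simp: above_def)
    then show ?thesis
      using less_cSUP_iff[OF _ bdd_above, of J "t J - inverse (real (Suc n))"]
      by (simp add: t_def)
  qed
  have "\<exists>J. \<forall>n. (J n \<in> F \<and> J0 \<subseteq> J n) \<and>
      (J n \<subseteq> J (Suc n) \<and> t (J n) - inverse (real (Suc n)) < f (J (Suc n)))"
  proof (rule dependent_nat_choice)
    show "\<exists>K. K \<in> F \<and> J0 \<subseteq> K" using \<open>J0 \<in> F\<close> by blast
  next
    fix K n assume K: "K \<in> F \<and> J0 \<subseteq> K"
    then obtain L where "L \<in> above K" "t K - inverse (real (Suc n)) < f L"
      using almost_max by blast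
    with K show "\<exists>L. (L \<in> F \<and> J0 \<subseteq> L) \<and> K \<subseteq> L \<and> t K - inverse (real (Suc n)) < f L"
      by (auto simp: above_def)
  qed
  then obtain J where J: "\<And>n. J n \<in> F \<and> J0 \<subseteq> J n"
    and step: "\<And>n. J n \<subseteq> J (Suc n) \<and> t (J n) - inverse (real (Suc n)) < f (J (Suc n))"
    by blast
  define U where "U = (\<Union>n. J n)"
  have "U \<in> F"
    unfolding U_def using J step by (intro incseq_Union incseq_SucI) auto
  moreover have "J0 \<subseteq> U" using J by (auto simp: U_def)
  moreover have "f K \<le> f U" if "K \<in> F" "U \<subseteq> K" for K
  proof (rule ccontr)
    assume "\<not> f K \<le> f U"
    then obtain n where n: "inverse (real (Suc n)) < f K - f U"
      using reals_Archimedean[of "f K - f U"] by auto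
    have "K \<in> above (J n)" using that by (auto simp: above_def U_def)
    then have "f K \<le> t (J n)"
      unfolding t_def by (rule cSUP_upper[OF _ bdd_above])
    also have "\<dots> < f (J (Suc n)) + inverse (real (Suc n))" using step[of n] by simp
    also have "f (J (Suc n)) \<le> f U"
      using J \<open>U \<in> F\<close> by (intro mono) (auto simp: U_def)
    finally show False using n by simp
  qed
  ultimately show ?thesis using that by blast
qed

text \<open>An order embedding of \<open>[0, \<infinity>]\<close> into \<open>[0, 1]\<close>: measures may be infinite, but
  the almost-maximisation above needs bounded real values.\<close>

definition shrink_ennreal :: "ennreal \<Rightarrow> real" where
  "shrink_ennreal x = (if x = \<infinity> then 1 else enn2real x / (1 + enn2real x))"

lemma shrink_ennreal_le_1: "shrink_ennreal x \<le> 1"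
  by (simp add: shrink_ennreal_def divide_le_eq_1 add_pos_nonneg)

lemma shrink_ennreal_strict_mono:
  assumes "x < y"
  shows "shrink_ennreal x < shrink_ennreal y"
proof -
  have "x \<noteq> \<infinity>" using assms by auto
  show ?thesis
  proof (cases "y = \<infinity>")
    case True
    with \<open>x \<noteq> \<infinity>\<close> show ?thesis
      by (simp add: shrink_ennreal_def divide_less_eq_1 add_pos_nonneg)
  next
    case False
    with assms \<open>x \<noteq> \<infinity>\<close> have "enn2real x < enn2real y"
      by (simp add: enn2real_less_iff less_top)
    then show ?thesis
      using real_shrink_lt[of "enn2real x" "enn2real y"] False \<open>x \<noteq> \<infinity>\<close>
      by (simp add: shrink_ennreal_def)
  qed
qed

lemma shrink_ennreal_mono: "x \<le> y \<Longrightarrow> shrink_ennreal x \<le> shrink_ennreal y"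
  using shrink_ennreal_strict_mono by (cases "x = y") (auto simp: less_le)

lemma axiom_I2'_imp_I2: "axiom_I2' M \<I> \<Longrightarrow> axiom_I2 M \<I>"
  unfolding axiom_I2_def axiom_I2'_def by (meson order_less_le_trans)

lemma axiom_I2_imp_I2':
  assumes "\<I> \<subseteq> sets M" and "axiom_I1 \<I>" and "axiom_I2 M \<I>"
  shows "axiom_I2' M \<I>"
  unfolding axiom_I2'_def
proof (intro ballI)
  fix I1 I2 assume "I1 \<in> \<I>" "I2 \<in> \<I>"
  define F where "F = {K \<in> \<I>. I1 \<subseteq> K \<and> K \<subseteq> I1 \<union> I2}"
  define f where "f K = shrink_ennreal (emeasure M K)" for K
  have "\<exists>U\<in>F. \<forall>K\<in>F. U \<subseteq> K \<longrightarrow> f K \<le> f U"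
  proof -
    have "(\<Union>n. J n) \<in> F" if "incseq J" "\<And>n. J n \<in> F" for J
      using that \<open>axiom_I1 \<I>\<close> by (auto simp: F_def axiom_I1_def)
    moreover have "f K \<le> f L" if "L \<in> F" "K \<subseteq> L" for K L
      using that \<open>\<I> \<subseteq> sets M\<close> unfolding f_def F_def
      by (intro shrink_ennreal_mono emeasure_mono) auto
    moreover have "bdd_above (f ` F)"
      by (rule bdd_aboveI[of _ 1]) (auto simp: f_def shrink_ennreal_le_1)
    moreover have "I1 \<in> F" using \<open>I1 \<in> \<I>\<close> by (simp add: F_def)
    ultimately show ?thesis using exists_saturated_superset[of F f I1] by metis
  qed
  then obtain U where U: "U \<in> F" and saturated: "\<And>K. K \<in> F \<Longrightarrow> U \<subseteq> K \<Longrightarrow> f K \<le> f U"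
    by blast
  have "emeasure M I2 \<le> emeasure M U"
  proof (rule ccontr)
    assume "\<not> ?thesis"
    then have "emeasure M U < emeasure M I2" by simp
    moreover have "U \<in> \<I>" using U by (simp add: F_def)
    ultimately obtain K where K: "K \<in> \<I>" "U \<subseteq> K" "K \<subseteq> U \<union> I2" "emeasure M U < emeasure M K"
      using \<open>axiom_I2 M \<I>\<close> \<open>I2 \<in> \<I>\<close> unfolding axiom_I2_def by blast
    then have "K \<in> F" using U by (auto simp: F_def)
    with K saturated have "f K \<le> f U" by blast
    with shrink_ennreal_strict_mono[OF K(4)] show False by (simp add: f_def)
  qed
  with U show "\<exists>I3\<in>\<I>. I1 \<subseteq> I3 \<and> I3 \<subseteq> I1 \<union> I2 \<and> emeasure M I2 \<le> emeasure M I3"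
    by (auto simp: F_def)
qed

theorem lemma4p10:
  fixes M :: "'a::polish_space measure" and \<I> :: "'a set set"
  assumes "sets M = sets borel"
    and "\<I> \<subseteq> sets M"
    and "axiom_I1 \<I>"
  shows "axiom_I2 M \<I> \<longleftrightarrow> axiom_I2' M \<I>"
  using axiom_I2_imp_I2'[OF assms(2,3)] axiom_I2'_imp_I2 by blast

end
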